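(* Let $D$ be a squarefree integer and $q>3$ a prime not dividing $D$. Then $H_D^{(q)}\subset E^{(1)}(\mathbb{Q})$ depends only on the Legendre symbol $(D/q)$; denote it $H^{(q),(D/q)}$. Let $O_q$ be the order of the reduction of $P$ in $E^{(1)}(\mathbb{F}_q)$. Then there exist subsets $M_1^{(q)}$ and $M_{-1}^{(q)}$ of $\mathbb{Z}/O_q\mathbb{Z}$ such that $H^{(q),(D/q)}=\{kP : k\text{ odd and } k\equiv m\pmod{O_q}\text{ for some } m\in M_{(D/q)}^{(q)}\}$. Moreover, $1\in M_1^{(q)}$, and for $\varepsilon=\pm1$, if $k\in M_\varepsilon^{(q)}$ then $-k\in M_\varepsilon^{(q)}$.
   Context: $C_D\subset\mathbb{P}^4$ is the curve over $\mathbb{Q}$ given by $X_0^2-2X_1^2+X_2^2=0$, $X_1^2-2X_2^2+DX_3^2=0$, $X_2^2-2DX_3^2+X_4^2=0$, and $C_D(\mathbb{F}_q)$ the $\mathbb{F}_q$-points of its reduction. $E^{(1)}: y^2=x(x+2)(x+6)$, $P=(6,24)$, $H=\{kP: k\text{ odd}\}$, $\phi:C_D\to E^{(1)}$ is $\phi([x_0:\dots:x_4])=(6x_0^2/x_4^2,\,24x_0x_1x_2/x_4^3)$ with reduction $\phi_q$, $\mathrm{red}_q$ is reduction mod $q$ on $E^{(1)}(\mathbb{Q})$, and $H_D^{(q)}:=\{R\in H : \mathrm{red}_q(R)\in\phi_q(C_D(\mathbb{F}_q))\}$. *)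

theory Defs
  imports "HOL-Number_Theory.Number_Theory" "HOL-Computational_Algebra.Squarefree"
begin

datatype 'a ecpt = Inf | Pt 'a 'a

definition on_E1 :: "rat ecpt \<Rightarrow> bool" where
  "on_E1 R = (case R of Inf \<Rightarrow> True | Pt x y \<Rightarrow> y^2 = x * (x + 2) * (x + 6))"

definition E1_neg :: "rat ecpt \<Rightarrow> rat ecpt" where
  "E1_neg R = (case R of Inf \<Rightarrow> Inf | Pt x y \<Rightarrow> Pt x (- y))"

text \<open>Chord-tangent group law on E1(Q) (a2 = 8, a4 = 12).\<close>
fun E1_add :: "rat ecpt \<Rightarrow> rat ecpt \<Rightarrow> rat ecpt" where
  "E1_add Inf R = R"
| "E1_add R Inf = R"
| "E1_add (Pt x1 y1) (Pt x2 y2) =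
     (if x1 = x2 \<and> y1 + y2 = 0 then Inf
      else let l = (if x1 = x2 then (3 * x1^2 + 16 * x1 + 12) / (2 * y1)
                    else (y2 - y1) / (x2 - x1));
               x3 = l^2 - 8 - x1 - x2;
               y3 = - (y1 + l * (x3 - x1))
           in Pt x3 y3)"

definition E1_mul :: "int \<Rightarrow> rat ecpt \<Rightarrow> rat ecpt" where
  "E1_mul k R = (if 0 \<le> k then (E1_add R ^^ nat k) Inf
                 else E1_neg ((E1_add R ^^ nat (- k)) Inf))"

definition P0 :: "rat ecpt" where "P0 = Pt 6 24"

definition H :: "rat ecpt set" where
  "H = {E1_mul k P0 | k. odd k}"

text \<open>Arithmetic in F_q, elements represented by integers in {0..<q}.\<close>
definition inv_q :: "nat \<Rightarrow> int \<Rightarrow> int" where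
  "inv_q q a = ((a mod int q) ^ (q - 2)) mod int q"

text \<open>Reduction mod q of a rational whose denominator is prime to q.\<close>
definition rat_red :: "nat \<Rightarrow> rat \<Rightarrow> int" where
  "rat_red q r = (case quotient_of r of (a, b) \<Rightarrow> (a * inv_q q b) mod int q)"

definition red_q :: "nat \<Rightarrow> rat ecpt \<Rightarrow> int ecpt" where
  "red_q q R = (case R of Inf \<Rightarrow> Inf
     | Pt x y \<Rightarrow> (if int q dvd snd (quotient_of x) then Inf
                  else Pt (rat_red q x) (rat_red q y)))"

fun E1q_add :: "nat \<Rightarrow> int ecpt \<Rightarrow> int ecpt \<Rightarrow> int ecpt" where
  "E1q_add q Inf R = R"
| "E1q_add q R Inf = R"
| "E1q_add q (Pt x1 y1) (Pt x2 y2) =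
     (if x1 mod int q = x2 mod int q \<and> (y1 + y2) mod int q = 0 then Inf
      else let l = (if x1 mod int q = x2 mod int q
                    then ((3 * x1^2 + 16 * x1 + 12) * inv_q q (2 * y1)) mod int q
                    else ((y2 - y1) * inv_q q (x2 - x1)) mod int q);
               x3 = (l^2 - 8 - x1 - x2) mod int q;
               y3 = (- (y1 + l * (x3 - x1))) mod int q
           in Pt x3 y3)"

definition E1q_order :: "nat \<Rightarrow> int ecpt \<Rightarrow> nat" where
  "E1q_order q R = (LEAST n. 0 < n \<and> (E1q_add q R ^^ n) Inf = Inf)"

text \<open>F_q-points of the reduction of C_D, given by their (nonzero) homogeneous coordinate
  vectors with entries in {0..<q}; every projective point is represented (by all its
  representatives).\<close>
definition CD_Fq :: "nat \<Rightarrow> int \<Rightarrow> (int \<times> int \<times> int \<times> int \<times> int) set" where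
  "CD_Fq q D = {(x0, x1, x2, x3, x4).
      x0 \<in> {0..<int q} \<and> x1 \<in> {0..<int q} \<and> x2 \<in> {0..<int q} \<and> x3 \<in> {0..<int q} \<and> x4 \<in> {0..<int q}
    \<and> (x0, x1, x2, x3, x4) \<noteq> (0, 0, 0, 0, 0)
    \<and> (x0^2 - 2 * x1^2 + x2^2) mod int q = 0
    \<and> (x1^2 - 2 * x2^2 + D * x3^2) mod int q = 0
    \<and> (x2^2 - 2 * D * x3^2 + x4^2) mod int q = 0}"

text \<open>The reduced map phi_q. Where x4 = 0 (then x0 <> 0 on C_D) the x-coordinate 6 x0^2/x4^2 has a
  pole, so the point maps to the point at infinity.\<close>
definition phi_q :: "nat \<Rightarrow> int \<times> int \<times> int \<times> int \<times> int \<Rightarrow> int ecpt" where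
  "phi_q q X = (case X of (x0, x1, x2, x3, x4) \<Rightarrow>
     (if x4 mod int q = 0 then Inf
      else Pt ((6 * x0^2 * inv_q q (x4^2)) mod int q)
              ((24 * x0 * x1 * x2 * inv_q q (x4^3)) mod int q)))"

definition H_Dq :: "int \<Rightarrow> nat \<Rightarrow> rat ecpt set" where
  "H_Dq D q = {R \<in> H. red_q q R \<in> phi_q q ` CD_Fq q D}"

end

theory Submission
  imports Defs
begin

text \<open>Reduction modulo \<open>q\<close> is compatible with adding \<open>P\<close>: for every rational point \<open>A\<close>,
  \<open>red (P + A)\<close> is the chord-tangent sum of \<open>red P\<close> and \<open>red A\<close> on \<open>E1(\<bbbF>_q)\<close>. This is checked
  by computing with congruences between \<open>q\<close>-integral rationals and integers; the points whose
  abscissa is not \<open>q\<close>-integral are handled by expanding the chord in the uniformizer \<open>x/y\<close>.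
  Together with the identity \<open>P + (-(P + A)) = -A\<close> on \<open>E1(\<rat>)\<close>, this allows \<open>P\<close> to be cancelled
  after reduction, so the multiples of \<open>red P\<close> are periodic and \<open>red (kP)\<close> only depends on
  \<open>k mod O\<^sub>q\<close>. On the other side, rescaling \<open>x3\<close> by \<open>v\<close> with \<open>D' v\<^sup>2 \<equiv> D\<close> maps \<open>C_D(\<bbbF>_q)\<close> to
  \<open>C_D'(\<bbbF>_q)\<close> without changing \<open>\<phi>_q\<close>, and such a \<open>v\<close> exists when \<open>(D/q) = (D'/q)\<close>. So
  \<open>\<phi>_q(C_D(\<bbbF>_q))\<close> depends only on the Legendre symbol, and \<open>M\<^sub>\<epsilon>\<close> is the set of residues \<open>m\<close>
  with \<open>red (mP)\<close> in it. The image is stable under negation (\<open>x0 \<mapsto> -x0\<close>) and, when \<open>D\<close> is a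
  square, contains \<open>red P = \<phi>_q(1 : 1 : 1 : 1/\<surd>D : 1)\<close>.\<close>

section \<open>Congruences of rational numbers modulo a prime\<close>

lemma inv_q_cong:
  assumes "prime q" "\<not> int q dvd z"
  shows "[z * inv_q q z = 1] (mod int q)"
proof -
  define n where "n = nat (z mod int q)"
  have zn: "z mod int q = int n"
    unfolding n_def using prime_gt_0_nat[OF assms(1)] by simp
  have "\<not> q dvd n"
  proof
    assume "q dvd n"
    then have "int q dvd z mod int q"
      unfolding zn by simp
    then show False
      using assms(2) by (simp add: dvd_mod_iff)
  qed
  then have "[n ^ (q - 1) = 1] (mod q)"
    using fermat_theorem assms(1) by blast
  then have fermat: "[(z mod int q) ^ (q - 1) = 1] (mod int q)"
    unfolding zn by (metis cong_int_iff of_nat_1 of_nat_power)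
  have "q - 1 = Suc (q - 2)"
    using prime_ge_2_nat[OF assms(1)] by simp
  then have "[z * inv_q q z = (z mod int q) ^ (q - 1)] (mod int q)"
    unfolding inv_q_def cong_def by (simp add: mod_mult_left_eq mod_mult_right_eq)
  then show ?thesis
    using fermat by (rule cong_trans)
qed

lemma inv_q_range: "prime q \<Longrightarrow> inv_q q z \<in> {0..<int q}"
  unfolding inv_q_def by (simp add: prime_gt_0_nat)

definition q_integral :: "nat \<Rightarrow> rat \<Rightarrow> bool" where
  "q_integral q r \<longleftrightarrow> \<not> int q dvd snd (quotient_of r)"

definition rat_cong :: "nat \<Rightarrow> rat \<Rightarrow> int \<Rightarrow> bool" where
  "rat_cong q r z \<longleftrightarrow>
     (\<exists>a b. r = of_int a / of_int b \<and> \<not> int q dvd b \<and> [z * b = a] (mod int q))"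

locale prime_modulus =
  fixes q :: nat
  assumes prime: "prime q"
begin

lemma prime_int: "prime (int q)"
  using prime by simp

lemma not_dvd_mult: "\<not> int q dvd a \<Longrightarrow> \<not> int q dvd b \<Longrightarrow> \<not> int q dvd a * b"
  using prime_int prime_dvd_mult_iff by blast

lemma not_dvd_1: "\<not> int q dvd 1"
  using prime_int by (simp add: prime_int_iff)

lemma cong_mult_cancel:
  "\<not> int q dvd k \<Longrightarrow> [a * k = b * k] (mod int q) \<longleftrightarrow> [a = b] (mod int q)"
  using prime_int by (metis cong_mult_rcancel coprime_commute prime_imp_coprime)

lemma rat_congI:
  "r = of_int a / of_int b \<Longrightarrow> \<not> int q dvd b \<Longrightarrow> [z * b = a] (mod int q) \<Longrightarrow> rat_cong q r z"
  unfolding rat_cong_def by blast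

lemma rat_congE:
  assumes "rat_cong q r z"
  obtains a b where "r = of_int a / of_int b" "b \<noteq> 0" "\<not> int q dvd b" "[z * b = a] (mod int q)"
  using assms unfolding rat_cong_def by fastforce

lemma rat_cong_q_integral:
  assumes "rat_cong q r z"
  shows "q_integral q r"
proof -
  obtain a b where ab: "r = of_int a / of_int b" "b \<noteq> 0" "\<not> int q dvd b"
    using assms by (rule rat_congE)
  obtain n d where nd: "quotient_of r = (n, d)"
    by (cases "quotient_of r")
  have "r = of_int n / of_int d" "d > 0" "coprime n d"
    using nd quotient_of_div quotient_of_denom_pos quotient_of_coprime by blast+
  then have "n * b = a * d"
    using ab by (simp add: field_simps flip: of_int_mult of_int_eq_iff)
  then have "d dvd b"
    using \<open>coprime n d\<close> by (metis coprime_commute coprime_dvd_mult_right_iff dvd_triv_right)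
  then show ?thesis
    using ab(3) nd dvd_trans unfolding q_integral_def by fastforce
qed

lemma rat_cong_rat_red:
  assumes "q_integral q r"
  shows "rat_cong q r (rat_red q r)"
proof -
  obtain n d where nd: "quotient_of r = (n, d)"
    by (cases "quotient_of r")
  have d: "\<not> int q dvd d"
    using assms nd unfolding q_integral_def by simp
  have "[rat_red q r * d = (n * inv_q q d) * d] (mod int q)"
    unfolding rat_red_def nd cong_def by (simp add: mod_mult_left_eq)
  also have "(n * inv_q q d) * d = n * (d * inv_q q d)"
    by (simp add: ac_simps)
  also have "[n * (d * inv_q q d) = n * 1] (mod int q)"
    using inv_q_cong[OF prime d] by (intro cong_mult cong_refl)
  finally show ?thesis
    using nd d quotient_of_div by (intro rat_congI[of r n d]) simp_all
qed

lemma q_integral_iff_rat_cong: "q_integral q r \<longleftrightarrow> (\<exists>z. rat_cong q r z)"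
  using rat_cong_q_integral rat_cong_rat_red by blast

lemma rat_cong_unique:
  assumes "rat_cong q r z" "rat_cong q r w"
  shows "[z = w] (mod int q)"
proof -
  obtain a b where ab: "r = of_int a / of_int b" "b \<noteq> 0" "\<not> int q dvd b" "[z * b = a] (mod int q)"
    using assms(1) by (rule rat_congE)
  obtain c d where cd: "r = of_int c / of_int d" "d \<noteq> 0" "\<not> int q dvd d" "[w * d = c] (mod int q)"
    using assms(2) by (rule rat_congE)
  have "a * d = c * b"
    using ab cd by (simp add: field_simps flip: of_int_mult of_int_eq_iff)
  have "[z * (b * d) = a * d] (mod int q)"
    using ab(4) by (metis cong_scalar_right mult.assoc)
  also have "a * d = c * b" by fact
  also have "[c * b = w * (b * d)] (mod int q)"
    using cd(4) by (metis cong_scalar_right cong_sym mult.assoc mult.commute)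
  finally show ?thesis
    using cong_mult_cancel[OF not_dvd_mult[OF ab(3) cd(3)]] by blast
qed

lemma rat_cong_trans:
  assumes "rat_cong q r z" "[z = w] (mod int q)"
  shows "rat_cong q r w"
proof -
  obtain a b where ab: "r = of_int a / of_int b" "\<not> int q dvd b" "[z * b = a] (mod int q)"
    using assms(1) by (rule rat_congE)
  have "[w * b = z * b] (mod int q)"
    using cong_sym[OF assms(2)] by (rule cong_scalar_right)
  then show ?thesis
    using ab cong_trans by (intro rat_congI) blast+
qed

lemma rat_cong_mod: "rat_cong q r z \<Longrightarrow> rat_cong q r (z mod int q)"
  by (erule rat_cong_trans) (simp add: cong_def)

lemma rat_red_eq:
  assumes "rat_cong q r z"
  shows "rat_red q r = z mod int q"
proof -
  have "[rat_red q r = z] (mod int q)"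
    using assms rat_cong_rat_red rat_cong_q_integral rat_cong_unique by blast
  moreover have "rat_red q r mod int q = rat_red q r"
    unfolding rat_red_def by (simp split: prod.split)
  ultimately show ?thesis
    by (simp add: cong_def)
qed

lemma rat_red_range: "rat_red q r \<in> {0..<int q}"
  using prime_gt_0_nat[OF prime] unfolding rat_red_def by (simp split: prod.split)

lemma rat_cong_of_int: "rat_cong q (of_int n) n"
  using not_dvd_1 by (intro rat_congI[of _ n 1]) simp_all

lemma rat_cong_numeral: "rat_cong q (numeral n) (numeral n)"
  using rat_cong_of_int[of "numeral n"] by simp

lemma rat_cong_0: "rat_cong q 0 0"
  using rat_cong_of_int[of 0] by simp

lemma rat_cong_1: "rat_cong q 1 1"
  using rat_cong_of_int[of 1] by simp

lemma rat_cong_add: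
  assumes "rat_cong q r z" "rat_cong q s w"
  shows "rat_cong q (r + s) (z + w)"
proof -
  obtain a b where ab: "r = of_int a / of_int b" "b \<noteq> 0" "\<not> int q dvd b" "[z * b = a] (mod int q)"
    using assms(1) by (rule rat_congE)
  obtain c d where cd: "s = of_int c / of_int d" "d \<noteq> 0" "\<not> int q dvd d" "[w * d = c] (mod int q)"
    using assms(2) by (rule rat_congE)
  have "r + s = of_int (a * d + c * b) / of_int (b * d)"
    unfolding ab(1) cd(1) using ab(2) cd(2) by (simp add: field_simps)
  moreover have "[z * b * d + w * d * b = a * d + c * b] (mod int q)"
    using ab(4) cd(4) by (intro cong_add cong_mult cong_refl)
  then have "[(z + w) * (b * d) = a * d + c * b] (mod int q)"
    by (simp add: algebra_simps)
  ultimately show ?thesis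
    using not_dvd_mult[OF ab(3) cd(3)] by (blast intro: rat_congI)
qed

lemma rat_cong_mult:
  assumes "rat_cong q r z" "rat_cong q s w"
  shows "rat_cong q (r * s) (z * w)"
proof -
  obtain a b where ab: "r = of_int a / of_int b" "b \<noteq> 0" "\<not> int q dvd b" "[z * b = a] (mod int q)"
    using assms(1) by (rule rat_congE)
  obtain c d where cd: "s = of_int c / of_int d" "d \<noteq> 0" "\<not> int q dvd d" "[w * d = c] (mod int q)"
    using assms(2) by (rule rat_congE)
  have "r * s = of_int (a * c) / of_int (b * d)"
    unfolding ab(1) cd(1) by simp
  moreover have "[(z * b) * (w * d) = a * c] (mod int q)"
    using ab(4) cd(4) by (rule cong_mult)
  then have "[(z * w) * (b * d) = a * c] (mod int q)"
    by (simp add: ac_simps)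
  ultimately show ?thesis
    using not_dvd_mult[OF ab(3) cd(3)] by (blast intro: rat_congI)
qed

lemma rat_cong_uminus: "rat_cong q r z \<Longrightarrow> rat_cong q (- r) (- z)"
  using rat_cong_mult[OF rat_cong_of_int[of "-1"]] by simp

lemma rat_cong_diff: "rat_cong q r z \<Longrightarrow> rat_cong q s w \<Longrightarrow> rat_cong q (r - s) (z - w)"
  using rat_cong_add[of r z "- s" "- w"] rat_cong_uminus by simp

lemma rat_cong_power: "rat_cong q r z \<Longrightarrow> rat_cong q (r ^ n) (z ^ n)"
  by (induction n) (auto intro: rat_cong_mult rat_cong_1)

lemma rat_cong_inverse:
  assumes "rat_cong q r z" "\<not> int q dvd z"
  shows "rat_cong q (inverse r) (inv_q q z)"
proof -
  obtain a b where ab: "r = of_int a / of_int b" "b \<noteq> 0" "\<not> int q dvd b" "[z * b = a] (mod int q)"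
    using assms(1) by (rule rat_congE)
  have a: "\<not> int q dvd a"
    using cong_dvd_iff[OF ab(4)] not_dvd_mult[OF assms(2) ab(3)] by blast
  have "[inv_q q z * a = inv_q q z * (z * b)] (mod int q)"
    using cong_sym[OF ab(4)] by (intro cong_mult cong_refl)
  also have "inv_q q z * (z * b) = (z * inv_q q z) * b"
    by (simp add: ac_simps)
  also have "[(z * inv_q q z) * b = 1 * b] (mod int q)"
    using inv_q_cong[OF prime assms(2)] by (intro cong_mult cong_refl)
  finally show ?thesis
    using ab(1) a by (intro rat_congI[of _ b a]) simp_all
qed

lemma rat_cong_divide:
  "rat_cong q r z \<Longrightarrow> rat_cong q s w \<Longrightarrow> \<not> int q dvd w \<Longrightarrow> rat_cong q (r / s) (z * inv_q q w)"
  using rat_cong_mult rat_cong_inverse by (simp add: divide_inverse)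

lemma rat_cong_divide_1: "rat_cong q r z \<Longrightarrow> rat_cong q s 1 \<Longrightarrow> rat_cong q (r / s) z"
  using rat_cong_divide[of r z s 1] not_dvd_1 prime_gt_1_nat[OF prime]
  by (simp add: inv_q_def)

lemmas rat_cong_intros =
  rat_cong_add rat_cong_diff rat_cong_mult rat_cong_uminus rat_cong_power
  rat_cong_numeral rat_cong_0 rat_cong_1

lemma q_integral_square:
  assumes "q_integral q (r^2)"
  shows "q_integral q r"
proof -
  obtain a b where ab: "r^2 = of_int a / of_int b" "b \<noteq> 0" "\<not> int q dvd b"
    using assms rat_congE q_integral_iff_rat_cong by metis
  obtain n d where nd: "quotient_of r = (n, d)"
    by (cases "quotient_of r")
  have "r = of_int n / of_int d" "d > 0" "coprime n d"
    using nd quotient_of_div quotient_of_denom_pos quotient_of_coprime by blast+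
  then have "(of_int n / of_int d)^2 = (of_int a / of_int b :: rat)"
    using ab(1) by simp
  then have "of_int (n^2 * b) = (of_int (a * d^2) :: rat)"
    using ab(2) \<open>d > 0\<close> by (simp add: field_simps power_divide)
  then have e: "n^2 * b = a * d^2"
    by (simp only: of_int_eq_iff)
  have "\<not> int q dvd d"
  proof
    assume "int q dvd d"
    then have "int q dvd a * d^2"
      by (simp add: power2_eq_square)
    then have "int q dvd n^2 * b"
      unfolding e .
    then have "int q dvd n"
      using ab(3) prime_int prime_dvd_mult_iff prime_dvd_power by metis
    then have "int q dvd gcd n d"
      using \<open>int q dvd d\<close> by simp
    then show False
      using \<open>coprime n d\<close> not_dvd_1 by simp
  qed
  then show ?thesis
    unfolding q_integral_def nd by simp
qed

lemma not_q_integral_if_mult_cong: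
  assumes "rat_cong q s 0" "rat_cong q (r * s) w" "\<not> int q dvd w"
  shows "\<not> q_integral q r"
proof
  assume "q_integral q r"
  then have "rat_cong q (r * s) (rat_red q r * 0)"
    using rat_cong_mult[OF rat_cong_rat_red assms(1)] by blast
  then have "[0 = w] (mod int q)"
    using rat_cong_unique assms(2) by simp
  then show False
    using assms(3) by (simp add: cong_0_iff cong_sym_eq[of 0])
qed

lemma rat_cong_inverse_not_q_integral:
  assumes "\<not> q_integral q x"
  shows "rat_cong q (1 / x) 0"
proof -
  obtain n d where nd: "quotient_of x = (n, d)"
    by (cases "quotient_of x")
  have "x = of_int n / of_int d" "coprime n d"
    using nd quotient_of_div quotient_of_coprime by blast+
  moreover have "int q dvd d"
    using assms nd unfolding q_integral_def by simp
  ultimately have "\<not> int q dvd n"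
    using not_dvd_1 by (metis coprime_common_divisor)
  then show ?thesis
    unfolding \<open>x = _\<close> using \<open>int q dvd d\<close>
    by (intro rat_congI[of _ d n]) (simp_all add: cong_0_iff cong_sym_eq[of 0])
qed

lemma rat_cong_square_0:
  assumes "rat_cong q (t^2) 0"
  shows "rat_cong q t 0"
proof -
  have "q_integral q t"
    using assms rat_cong_q_integral q_integral_square by blast
  then have "rat_cong q (t^2) (rat_red q t ^ 2)"
    using rat_cong_rat_red rat_cong_power by blast
  then have "int q dvd rat_red q t"
    using rat_cong_unique[OF _ assms] prime_int prime_dvd_power by (metis cong_0_iff)
  then show ?thesis
    using rat_cong_rat_red[OF \<open>q_integral q t\<close>] rat_cong_trans by (metis cong_0_iff)
qed

end

section \<open>The group law on \<open>E1(\<rat>)\<close>\<close>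

text \<open>The sum of \<open>(x1, y1)\<close> and a second point with abscissa \<open>x2\<close> when the line through
  them (the tangent if they coincide) has slope \<open>l\<close>.\<close>

definition E1_line_add :: "rat \<Rightarrow> rat \<Rightarrow> rat \<Rightarrow> rat \<Rightarrow> rat ecpt" where
  "E1_line_add l x1 y1 x2 = (let x3 = l^2 - 8 - x1 - x2 in Pt x3 (- (y1 + l * (x3 - x1))))"

lemma E1_add_chord:
  "x1 \<noteq> x2 \<Longrightarrow> E1_add (Pt x1 y1) (Pt x2 y2) = E1_line_add ((y2 - y1) / (x2 - x1)) x1 y1 x2"
  by (simp add: E1_line_add_def Let_def)

lemma E1_add_tangent:
  "y1 \<noteq> 0 \<Longrightarrow>
   E1_add (Pt x1 y1) (Pt x1 y1) = E1_line_add ((3 * x1^2 + 16 * x1 + 12) / (2 * y1)) x1 y1 x1"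
  by (simp add: E1_line_add_def Let_def)

lemma E1_add_opposite [simp]: "E1_add (Pt x y) (Pt x (- y)) = Inf"
  by simp

declare E1_add.simps(3) [simp del]

lemma on_E1_Inf [simp]: "on_E1 Inf"
  by (simp add: on_E1_def)

lemma on_E1_Pt: "on_E1 (Pt x y) \<longleftrightarrow> y^2 = x * (x + 2) * (x + 6)"
  by (simp add: on_E1_def)

lemma on_E1_line_add_chord:
  fixes x1 y1 x2 y2 l :: rat
  assumes "on_E1 (Pt x1 y1)" "on_E1 (Pt x2 y2)" "x1 \<noteq> x2" "l * (x2 - x1) = y2 - y1"
  shows "on_E1 (E1_line_add l x1 y1 x2)"
proof -
  define x3 where "x3 = l^2 - 8 - x1 - x2"
  have "(x2 - x1) * (x3 * (x3 + 2) * (x3 + 6) - (y1 + l * (x3 - x1))^2)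
      = (x2 * (x2 + 2) * (x2 + 6) - (y1 + l * (x2 - x1))^2) * (x3 - x1)
        - (x1 * (x1 + 2) * (x1 + 6) - y1^2) * (x3 - x2)"
    unfolding x3_def by (simp add: algebra_simps power2_eq_square)
  also have "\<dots> = 0"
    using assms(1,2,4) by (simp add: on_E1_Pt algebra_simps)
  finally show ?thesis
    unfolding E1_line_add_def Let_def x3_def[symmetric] on_E1_Pt power2_minus
    using assms(3) by simp
qed

lemma on_E1_line_add_tangent:
  fixes x1 y1 l :: rat
  assumes "on_E1 (Pt x1 y1)" "l * (2 * y1) = 3 * x1^2 + 16 * x1 + 12"
  shows "on_E1 (E1_line_add l x1 y1 x1)"
proof -
  define x3 where "x3 = l^2 - 8 - x1 - x1"
  have "x3 * (x3 + 2) * (x3 + 6) - (y1 + l * (x3 - x1))^2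
      = (x1 * (x1 + 2) * (x1 + 6) - y1^2) + (3 * x1^2 + 16 * x1 + 12 - l * (2 * y1)) * (x3 - x1)"
    unfolding x3_def by (simp add: algebra_simps power2_eq_square)
  also have "\<dots> = 0"
    using assms by (simp add: on_E1_Pt)
  finally show ?thesis
    unfolding E1_line_add_def Let_def x3_def[symmetric] on_E1_Pt power2_minus by simp
qed

lemma on_E1_add_Pt:
  assumes A: "on_E1 (Pt x1 y1)" and B: "on_E1 (Pt x2 y2)"
  shows "on_E1 (E1_add (Pt x1 y1) (Pt x2 y2))"
proof -
  consider "x1 = x2" "y2 = - y1" | "x1 = x2" "y2 \<noteq> - y1" | "x1 \<noteq> x2"
    by blast
  then show ?thesis
  proof cases
    case 1
    then show ?thesis
      by simp
  next
    case 2
    then have "y2^2 = y1^2"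
      using A B by (simp add: on_E1_Pt)
    then have "y2 = y1" "y1 \<noteq> 0"
      using 2 by (auto simp: power2_eq_iff)
    then show ?thesis
      using 2 E1_add_tangent on_E1_line_add_tangent[OF A] by simp
  next
    case 3
    then show ?thesis
      using E1_add_chord on_E1_line_add_chord[OF A B] by simp
  qed
qed

lemma on_E1_add: "on_E1 A \<Longrightarrow> on_E1 B \<Longrightarrow> on_E1 (E1_add A B)"
  by (cases A; cases B) (auto simp: on_E1_add_Pt)

lemma on_E1_neg: "on_E1 A \<Longrightarrow> on_E1 (E1_neg A)"
  by (cases A) (auto simp: on_E1_def E1_neg_def)

lemma on_E1_P0: "on_E1 P0"
  by (simp add: on_E1_def P0_def)

lemma on_E1_iterate: "on_E1 ((E1_add P0 ^^ n) Inf)"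
  by (induction n) (simp_all add: on_E1_add on_E1_P0)

lemma on_E1_mul: "on_E1 (E1_mul k P0)"
  unfolding E1_mul_def using on_E1_iterate on_E1_neg by auto

lemma E1_neg_involutive: "E1_neg (E1_neg R) = R"
  by (cases R) (simp_all add: E1_neg_def)

lemma E1_mul_uminus: "E1_mul (- k) R = E1_neg (E1_mul k R)"
proof (cases "k = 0")
  case True
  then show ?thesis
    by (simp add: E1_mul_def E1_neg_def)
qed (simp add: E1_mul_def E1_neg_involutive)

lemma E1_neg_line_add:
  "E1_neg (E1_line_add l x1 y1 x2) = Pt (l^2 - 8 - x1 - x2) (y1 + l * (l^2 - 8 - x1 - x2 - x1))"
  by (simp add: E1_line_add_def E1_neg_def Let_def)

text \<open>\<open>E1_neg (E1_line_add l x1 y1 x2)\<close> is the third point of the curve on the line; adding it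
  to \<open>(x1, y1)\<close> along the same line gives back the reflection of the second point.\<close>

lemma E1_add_neg_line_add:
  fixes l x1 y1 x2 :: rat
  defines "x3 \<equiv> l^2 - 8 - x1 - x2"
  assumes tangent: "x3 = x1 \<Longrightarrow> y1 \<noteq> 0 \<and> l * (2 * y1) = 3 * x1^2 + 16 * x1 + 12"
  shows "E1_add (Pt x1 y1) (E1_neg (E1_line_add l x1 y1 x2)) = Pt x2 (- (y1 + l * (x2 - x1)))"
proof (cases "x3 = x1")
  case True
  have y1: "y1 \<noteq> 0" and l: "(3 * x1^2 + 16 * x1 + 12) / (2 * y1) = l"
    using tangent[OF True] by (auto simp: field_simps)
  have x2: "x2 = l^2 - 8 - x1 - x1"
    using True unfolding x3_def by simp
  have "E1_add (Pt x1 y1) (E1_neg (E1_line_add l x1 y1 x2)) = E1_add (Pt x1 y1) (Pt x1 y1)"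
    unfolding E1_neg_line_add x3_def[symmetric] True by simp
  also have "\<dots> = E1_line_add l x1 y1 x1"
    using E1_add_tangent[OF y1, of x1] unfolding l .
  finally show ?thesis
    by (simp add: E1_line_add_def Let_def x2)
next
  case False
  then have "((y1 + l * (x3 - x1)) - y1) / (x3 - x1) = l"
    by simp
  then show ?thesis
    using E1_add_chord[OF False[symmetric], of y1 "y1 + l * (x3 - x1)"] False
    unfolding E1_neg_line_add x3_def[symmetric]
    by (simp add: E1_line_add_def x3_def)
qed

lemma E1_chord_slope:
  assumes "on_E1 (Pt x1 y1)" "on_E1 (Pt x2 y2)" "x1 \<noteq> x2" "y1 + y2 \<noteq> 0"
  shows "(y2 - y1) / (x2 - x1) = (x1^2 + x1 * x2 + x2^2 + 8 * x1 + 8 * x2 + 12) / (y1 + y2)"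
proof -
  have "(y2 - y1) * (y2 + y1) = (x2 - x1) * (x1^2 + x1 * x2 + x2^2 + 8 * x1 + 8 * x2 + 12)"
    using assms(1,2) by (simp add: on_E1_Pt algebra_simps power2_eq_square)
  then show ?thesis
    using assms(3,4) by (simp add: frac_eq_eq add.commute)
qed

text \<open>The cubic \<open>x (x + 2) (x + 6) - (y1 + l (x - x1))\<^sup>2\<close> vanishes at \<open>x1\<close>, \<open>x2\<close> and
  \<open>x3 = l\<^sup>2 - 8 - x1 - x2\<close>, so its derivative at \<open>x1\<close> is \<open>(x1 - x2) (x1 - x3)\<close>.\<close>

lemma chord_tangent_defect:
  fixes x1 y1 x2 y2 l :: rat
  assumes "on_E1 (Pt x1 y1)" "on_E1 (Pt x2 y2)" "x1 \<noteq> x2" "l * (x2 - x1) = y2 - y1"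
  shows "3 * x1^2 + 16 * x1 + 12 - l * (2 * y1) = (x1 - x2) * (x1 - (l^2 - 8 - x1 - x2))"
proof -
  define g where "g x = x * (x + 2) * (x + 6) - (y1 + l * (x - x1))^2" for x
  have "(x1 - x2) * (3 * x1^2 + 16 * x1 + 12 - l * (2 * y1) - (x1 - x2) * (x1 - (l^2 - 8 - x1 - x2)))
      = g x1 - g x2"
    unfolding g_def by (simp add: algebra_simps power2_eq_square)
  also have "\<dots> = 0"
    using assms(1,2,4) unfolding g_def by (simp add: on_E1_Pt algebra_simps)
  finally show ?thesis
    using assms(3) by simp
qed

lemma chord_tangent_at_double_point:
  assumes "on_E1 (Pt x1 y1)" "on_E1 (Pt x2 y2)" "x1 \<noteq> x2" "l * (x2 - x1) = y2 - y1"
    and "l^2 - 8 - x1 - x2 = x1"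
  shows "y1 \<noteq> 0 \<and> l * (2 * y1) = 3 * x1^2 + 16 * x1 + 12"
proof -
  have tangent: "l * (2 * y1) = 3 * x1^2 + 16 * x1 + 12"
    using chord_tangent_defect[OF assms(1-4)] assms(5) by simp
  moreover have "y1 \<noteq> 0"
  proof
    assume "y1 = 0"
    then have "x1 = 0 \<or> x1 = -2 \<or> x1 = -6"
      using assms(1) by (auto simp: on_E1_Pt add_eq_0_iff)
    then show False
      using tangent \<open>y1 = 0\<close> by (auto simp: power2_eq_square)
  qed
  ultimately show ?thesis
    by simp
qed

lemma E1_add_neg_add:
  assumes "on_E1 A" "on_E1 B"
  shows "E1_add A (E1_neg (E1_add A B)) = E1_neg B"
proof (cases A; cases B)
  fix x1 y1 x2 y2
  assume A: "A = Pt x1 y1" and B: "B = Pt x2 y2"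
  have c1: "on_E1 (Pt x1 y1)" and c2: "on_E1 (Pt x2 y2)"
    using assms A B by simp_all
  consider "x1 = x2" "y2 = - y1" | "x1 = x2" "y2 \<noteq> - y1" | "x1 \<noteq> x2"
    by blast
  then show ?thesis
  proof cases
    case 1
    then show ?thesis
      using A B by (simp add: E1_neg_def)
  next
    case 2
    then have "y2^2 = y1^2"
      using c1 c2 by (simp add: on_E1_Pt)
    then have "y2 = y1" "y1 \<noteq> 0"
      using 2 by (auto simp: power2_eq_iff)
    define l where "l = (3 * x1^2 + 16 * x1 + 12) / (2 * y1)"
    have "E1_add A B = E1_line_add l x1 y1 x1"
      using A B \<open>y2 = y1\<close> 2(1) E1_add_tangent[OF \<open>y1 \<noteq> 0\<close>] unfolding l_def by simp
    moreover have "l * (2 * y1) = 3 * x1^2 + 16 * x1 + 12"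
      using \<open>y1 \<noteq> 0\<close> unfolding l_def by simp
    ultimately have "E1_add A (E1_neg (E1_add A B)) = Pt x1 (- (y1 + l * (x1 - x1)))"
      using A \<open>y1 \<noteq> 0\<close> E1_add_neg_line_add[of l x1 x1 y1] by simp
    then show ?thesis
      using B \<open>y2 = y1\<close> 2(1) by (simp add: E1_neg_def)
  next
    case 3
    define l where "l = (y2 - y1) / (x2 - x1)"
    have l: "l * (x2 - x1) = y2 - y1"
      using 3 unfolding l_def by simp
    have "E1_add (Pt x1 y1) (E1_neg (E1_line_add l x1 y1 x2)) = Pt x2 (- (y1 + l * (x2 - x1)))"
      using chord_tangent_at_double_point[OF c1 c2 3 l] by (rule E1_add_neg_line_add)
    moreover have "E1_add A B = E1_line_add l x1 y1 x2"
      using A B E1_add_chord[OF 3] unfolding l_def by simp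
    ultimately show ?thesis
      using A B l by (simp add: E1_neg_def)
  qed
qed (use assms in \<open>auto simp: E1_neg_def\<close>)

text \<open>The identity behind the expansion of the chord through a point near infinity: with
  \<open>u = 1/x\<close> and \<open>t = x/y\<close>, the curve equation reads \<open>u = t\<^sup>2 g\<close>.\<close>

lemma near_infinity_identity:
  fixes x1 y1 u t g :: rat
  assumes "on_E1 (Pt x1 y1)" and ut: "u = t^2 * g" and g: "g = 1 + 8 * u + 12 * u^2"
  shows "(1 - y1 * u * t)^2 * g - (1 + (8 + 2 * x1) * u) * (1 - x1 * u)^2
       = u * t * (- 2 * y1 * g + t * g * (3 * x1^2 + 16 * x1 + 12) + u * t * g * (12 * x1 - x1^3))"
proof -
  have y1: "y1^2 = x1^3 + 8 * x1^2 + 12 * x1"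
    using assms(1) by (simp add: on_E1_Pt algebra_simps power2_eq_square power3_eq_cube)
  have "(1 - y1 * u * t)^2 * g - (1 + (8 + 2 * x1) * u) * (1 - x1 * u)^2
      = u^2 * (3 * x1^2 + 16 * x1 + 12) - u^3 * (8 * x1^2 + 2 * x1^3) - 2 * y1 * u * t * g
        + y1^2 * u^2 * (t^2 * g)"
    unfolding g by (simp add: algebra_simps power2_eq_square power3_eq_cube)
  also have "\<dots> = u * (u * (3 * x1^2 + 16 * x1 + 12) + u^2 * (12 * x1 - x1^3) - 2 * y1 * t * g)"
    unfolding ut[symmetric] y1 by (simp add: algebra_simps power2_eq_square power3_eq_cube)
  also have "u * (3 * x1^2 + 16 * x1 + 12) + u^2 * (12 * x1 - x1^3) - 2 * y1 * t * g
      = (t^2 * g) * (3 * x1^2 + 16 * x1 + 12) + u * (t^2 * g) * (12 * x1 - x1^3) - 2 * y1 * t * g"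
    unfolding ut[symmetric] by (simp add: power2_eq_square)
  finally show ?thesis
    by (simp add: algebra_simps power2_eq_square)
qed

lemma E1_add_near_infinity:
  fixes x1 y1 u t g :: rat
  assumes "on_E1 (Pt x1 y1)" "u \<noteq> 0" "t \<noteq> 0" "1 - x1 * u \<noteq> 0"
    and ut: "u = t^2 * g" and g: "g = 1 + 8 * u + 12 * u^2"
  defines "K \<equiv> - 2 * y1 * g + t * g * (3 * x1^2 + 16 * x1 + 12) + u * t * g * (12 * x1 - x1^3)"
  shows "E1_add (Pt x1 y1) (Pt (1 / u) (1 / (u * t)))
       = Pt (x1 + t * K / (1 - x1 * u)^2) (- (y1 + (1 - y1 * u * t) * K / (1 - x1 * u)^3))"
proof -
  define v where "v = 1 - x1 * u"
  define l where "l = (1 / (u * t) - y1) / (1 / u - x1)"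
  have x1: "x1 \<noteq> 1 / u"
    using assms(2,4) by (auto simp: field_simps)
  have l': "l = (1 - y1 * u * t) / (t * v)"
    unfolding l_def v_def using assms(2-4) by (simp add: field_simps)
  have N: "(1 - y1 * u * t)^2 * g - (1 + (8 + 2 * x1) * u) * v^2 = u * t * K"
    unfolding v_def K_def using near_infinity_identity[OF assms(1) ut g] .
  have v: "v \<noteq> 0"
    using assms(4) unfolding v_def .
  have x3: "l^2 - 8 - x1 - 1 / u = x1 + t * K / v^2"
  proof -
    have l2: "l^2 = (1 - y1 * u * t)^2 * g / (u * v^2)"
      unfolding l' using assms(2,3) v by (simp add: ut field_simps power2_eq_square)
    have e: "(1 + (8 + 2 * x1) * u) * v^2 / (u * v^2) = 1 / u + 8 + 2 * x1"
      using assms(2) v by (simp add: field_simps)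
    have "l^2 - 8 - x1 - 1 / u - x1
        = (1 - y1 * u * t)^2 * g / (u * v^2) - (1 + (8 + 2 * x1) * u) * v^2 / (u * v^2)"
      unfolding e l2 by simp
    also have "\<dots> = u * t * K / (u * v^2)"
      unfolding N[symmetric] by (simp add: diff_divide_distrib)
    also have "\<dots> = t * K / v^2"
      using assms(2) by simp
    finally show ?thesis
      by simp
  qed
  have y3: "l * (x1 + t * K / v^2 - x1) = (1 - y1 * u * t) * K / v^3"
    unfolding l' using assms(3) v by (simp add: field_simps power2_eq_square power3_eq_cube)
  have "E1_add (Pt x1 y1) (Pt (1 / u) (1 / (u * t))) = E1_line_add l x1 y1 (1 / u)"
    using E1_add_chord[OF x1] unfolding l_def .
  also have "\<dots> = Pt (x1 + t * K / v^2) (- (y1 + (1 - y1 * u * t) * K / v^3))"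
    by (simp only: E1_line_add_def Let_def x3 y3)
  finally show ?thesis
    unfolding v_def .
qed

section \<open>Reduction modulo \<open>q\<close>\<close>

lemma red_q_Inf [simp]: "red_q q Inf = Inf"
  by (simp add: red_q_def)

lemma red_q_Pt: "q_integral q x \<Longrightarrow> red_q q (Pt x y) = Pt (rat_red q x) (rat_red q y)"
  unfolding red_q_def q_integral_def by simp

lemma red_q_Pt_Inf: "\<not> q_integral q x \<Longrightarrow> red_q q (Pt x y) = Inf"
  unfolding red_q_def q_integral_def by simp

definition E1q_line_add :: "nat \<Rightarrow> int \<Rightarrow> int \<Rightarrow> int \<Rightarrow> int \<Rightarrow> int ecpt" where
  "E1q_line_add q L a1 b1 a2 =
     (let a3 = (L^2 - 8 - a1 - a2) mod int q in Pt a3 ((- (b1 + L * (a3 - a1))) mod int q))"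

lemma E1q_add_chord:
  "\<not> [a1 = a2] (mod int q) \<Longrightarrow>
   E1q_add q (Pt a1 b1) (Pt a2 b2) = E1q_line_add q (((b2 - b1) * inv_q q (a2 - a1)) mod int q) a1 b1 a2"
  unfolding cong_def E1q_add.simps E1q_line_add_def by (simp only: if_False simp_thms Let_def)

lemma E1q_add_tangent:
  "[a1 = a2] (mod int q) \<Longrightarrow> \<not> int q dvd b1 + b2 \<Longrightarrow>
   E1q_add q (Pt a1 b1) (Pt a2 b2)
     = E1q_line_add q (((3 * a1^2 + 16 * a1 + 12) * inv_q q (2 * b1)) mod int q) a1 b1 a2"
  unfolding cong_def E1q_add.simps E1q_line_add_def dvd_eq_mod_eq_0
  by (simp only: if_False if_True simp_thms Let_def)

lemma E1q_add_opposite: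
  "[a1 = a2] (mod int q) \<Longrightarrow> int q dvd b1 + b2 \<Longrightarrow> E1q_add q (Pt a1 b1) (Pt a2 b2) = Inf"
  unfolding cong_def E1q_add.simps dvd_eq_mod_eq_0 by (simp only: if_True simp_thms)

definition E1q_neg :: "nat \<Rightarrow> int ecpt \<Rightarrow> int ecpt" where
  "E1q_neg q R = (case R of Inf \<Rightarrow> Inf | Pt x y \<Rightarrow> Pt x ((- y) mod int q))"

context prime_modulus
begin

lemma red_q_range: "red_q q A \<in> insert Inf (case_prod Pt ` ({0..<int q} \<times> {0..<int q}))"
  using rat_red_range by (auto simp: red_q_def split: ecpt.splits)

lemma red_q_Pt_rat_cong:
  "rat_cong q x a \<Longrightarrow> rat_cong q y b \<Longrightarrow> red_q q (Pt x y) = Pt (a mod int q) (b mod int q)"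
  using red_q_Pt rat_cong_q_integral rat_red_eq by simp

lemma on_E1_q_integral:
  assumes "on_E1 (Pt x y)" "q_integral q x"
  shows "q_integral q y"
proof -
  obtain a where "rat_cong q x a"
    using assms(2) q_integral_iff_rat_cong by blast
  then have "rat_cong q (x * (x + 2) * (x + 6)) (a * (a + 2) * (a + 6))"
    by (intro rat_cong_intros)
  then have "q_integral q (y^2)"
    using assms(1) rat_cong_q_integral by (simp add: on_E1_Pt)
  then show ?thesis
    by (rule q_integral_square)
qed

lemma red_E1_neg:
  assumes "on_E1 A"
  shows "red_q q (E1_neg A) = E1q_neg q (red_q q A)"
proof (cases A)
  case (Pt x y)
  show ?thesis
  proof (cases "q_integral q x")
    case True
    then have "rat_cong q y (rat_red q y)"
      using assms Pt on_E1_q_integral rat_cong_rat_red by blast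
    then have "rat_red q (- y) = (- rat_red q y) mod int q"
      using rat_cong_uminus rat_red_eq by blast
    then show ?thesis
      using Pt True by (simp add: E1_neg_def E1q_neg_def red_q_Pt)
  qed (use Pt in \<open>simp add: E1_neg_def E1q_neg_def red_q_Pt_Inf\<close>)
qed (simp add: E1_neg_def E1q_neg_def)

lemma E1q_neg_involutive: "E1q_neg q (E1q_neg q (red_q q A)) = red_q q A"
  using red_q_range[of A] by (auto simp: E1q_neg_def mod_minus_eq)

lemma red_E1_line_add:
  assumes "rat_cong q l L" "rat_cong q x1 a1" "rat_cong q y1 b1" "rat_cong q x2 a2"
  shows "red_q q (E1_line_add l x1 y1 x2) = E1q_line_add q L a1 b1 a2"
proof -
  define a3 where "a3 = (L^2 - 8 - a1 - a2) mod int q"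
  have "rat_cong q (l^2 - 8 - x1 - x2) (L^2 - 8 - a1 - a2)"
    using assms by (intro rat_cong_intros)
  then have x3: "rat_cong q (l^2 - 8 - x1 - x2) a3"
    unfolding a3_def by (rule rat_cong_mod)
  then have "rat_cong q (- (y1 + l * ((l^2 - 8 - x1 - x2) - x1))) (- (b1 + L * (a3 - a1)))"
    using assms by (intro rat_cong_intros rat_cong_add)
  then show ?thesis
    using red_q_Pt_rat_cong[OF x3] unfolding E1_line_add_def E1q_line_add_def a3_def Let_def
    by simp
qed

lemma red_E1_line_add_pole:
  assumes "l * s = 1" "rat_cong q s 0" "rat_cong q x1 a1" "rat_cong q x2 a2"
  shows "red_q q (E1_line_add l x1 y1 x2) = Inf"
proof -
  have s2: "rat_cong q (s^2) 0"
    using rat_cong_power[OF assms(2), of 2] by simp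
  have "(l^2 - 8 - x1 - x2) * s^2 = 1 - (8 + x1 + x2) * s^2"
    using assms(1) by (simp add: algebra_simps power2_eq_square)
  moreover have "rat_cong q (1 - (8 + x1 + x2) * s^2) (1 - (8 + a1 + a2) * 0)"
    using assms(3,4) s2 by (intro rat_cong_intros)
  ultimately have "rat_cong q ((l^2 - 8 - x1 - x2) * s^2) 1"
    by simp
  then have "\<not> q_integral q (l^2 - 8 - x1 - x2)"
    using not_q_integral_if_mult_cong[OF s2] not_dvd_1 by blast
  then show ?thesis
    unfolding E1_line_add_def Let_def by (rule red_q_Pt_Inf)
qed

lemma not_q_integral_uniformizer:
  assumes "on_E1 (Pt x y)" "\<not> q_integral q x"
  obtains u t where "x = 1 / u" "y = 1 / (u * t)" "u \<noteq> 0" "t \<noteq> 0"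
    "u = t^2 * (1 + 8 * u + 12 * u^2)" "rat_cong q u 0" "rat_cong q t 0"
proof -
  define u t g where "u = 1 / x" and "t = x / y" and "g = 1 + 8 * u + 12 * u^2"
  have u: "rat_cong q u 0"
    unfolding u_def using assms(2) by (rule rat_cong_inverse_not_q_integral)
  have "x \<noteq> 0" "x \<noteq> -2" "x \<noteq> -6"
    using assms(2) rat_cong_q_integral[OF rat_cong_of_int[of 0]]
      rat_cong_q_integral[OF rat_cong_of_int[of "-2"]]
      rat_cong_q_integral[OF rat_cong_of_int[of "-6"]] by auto
  then have x0: "x \<noteq> 0" and fx: "(x + 2) * (x + 6) \<noteq> 0"
    by (auto simp: add_eq_0_iff)
  then have y0: "y \<noteq> 0"
    using assms(1) by (auto simp: on_E1_Pt)
  have y2: "y^2 = x * ((x + 2) * (x + 6))"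
    using assms(1) by (simp add: on_E1_Pt mult.assoc)
  have "g = (x + 2) * (x + 6) / x^2"
    unfolding g_def u_def using x0 by (simp add: field_simps power2_eq_square)
  then have "t^2 * g = x^2 / (x * ((x + 2) * (x + 6))) * ((x + 2) * (x + 6) / x^2)"
    unfolding t_def power_divide y2 by simp
  also have "\<dots> = u"
    unfolding u_def using x0 fx by (simp add: power2_eq_square)
  finally have ut: "u = t^2 * g" ..
  have "rat_cong q g (1 + 8 * 0 + 12 * 0^2)"
    unfolding g_def using u by (intro rat_cong_intros)
  then have "rat_cong q g 1"
    by simp
  then have "rat_cong q (u / g) 0"
    using rat_cong_divide_1[OF u] by blast
  moreover have "t^2 = u / g"
    using ut u_def x0 by auto
  ultimately have "rat_cong q (t^2) 0"
    by simp
  then have "rat_cong q t 0"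
    by (rule rat_cong_square_0)
  moreover have "x = 1 / u" "y = 1 / (u * t)" "u \<noteq> 0" "t \<noteq> 0"
    unfolding u_def t_def using x0 y0 by simp_all
  ultimately show ?thesis
    using that ut u unfolding g_def by blast
qed

lemma red_E1_add_not_q_integral:
  assumes P1: "on_E1 (Pt x1 y1)" and P2: "on_E1 (Pt x2 y2)"
    and "q_integral q x1" "\<not> q_integral q x2"
  shows "red_q q (E1_add (Pt x1 y1) (Pt x2 y2)) = red_q q (Pt x1 y1)"
proof -
  obtain u t where x2: "x2 = 1 / u" and y2: "y2 = 1 / (u * t)" and "u \<noteq> 0" "t \<noteq> 0"
    and ut: "u = t^2 * (1 + 8 * u + 12 * u^2)" and u: "rat_cong q u 0" and t: "rat_cong q t 0"
    using not_q_integral_uniformizer[OF P2 assms(4)] by blast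
  define a1 b1 where "a1 = rat_red q x1" and "b1 = rat_red q y1"
  have x1: "rat_cong q x1 a1" and y1: "rat_cong q y1 b1"
    unfolding a1_def b1_def using assms(3) on_E1_q_integral[OF P1] rat_cong_rat_red by blast+
  have "1 - x1 * u \<noteq> 0"
  proof
    assume "1 - x1 * u = 0"
    then have "x1 = x2"
      unfolding x2 using \<open>u \<noteq> 0\<close> by (simp add: field_simps)
    then show False
      using assms(3,4) by simp
  qed
  define g where "g = 1 + 8 * u + 12 * u^2"
  define K where "K = - 2 * y1 * g + t * g * (3 * x1^2 + 16 * x1 + 12) + u * t * g * (12 * x1 - x1^3)"
  define v where "v = 1 - x1 * u"
  have "rat_cong q g (1 + 8 * 0 + 12 * 0^2)"
    unfolding g_def using u by (intro rat_cong_intros)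
  then have g: "rat_cong q g 1"
    by simp
  have "rat_cong q K (- 2 * b1 * 1 + 0 * 1 * (3 * a1^2 + 16 * a1 + 12) + 0 * 0 * 1 * (12 * a1 - a1^3))"
    unfolding K_def using u t g x1 y1 by (intro rat_cong_intros)
  then have K: "rat_cong q K (- 2 * b1)"
    by simp
  have "rat_cong q v (1 - a1 * 0)"
    unfolding v_def using u x1 by (intro rat_cong_intros)
  then have v: "rat_cong q (v ^ n) 1" for n
    using rat_cong_power[of v 1 n] by simp
  have "rat_cong q (x1 + t * K / v^2) (a1 + 0 * (- 2 * b1))"
    using x1 t K v by (intro rat_cong_add rat_cong_divide_1 rat_cong_mult)
  moreover have "rat_cong q (- (y1 + (1 - y1 * u * t) * K / v^3)) (- (b1 + (1 - b1 * 0 * 0) * (- 2 * b1)))"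
    using y1 u t K v by (intro rat_cong_intros rat_cong_divide_1)
  ultimately have "red_q q (Pt (x1 + t * K / v^2) (- (y1 + (1 - y1 * u * t) * K / v^3)))
      = Pt (a1 mod int q) (b1 mod int q)"
    by (simp add: red_q_Pt_rat_cong)
  moreover have "E1_add (Pt x1 y1) (Pt x2 y2)
      = Pt (x1 + t * K / v^2) (- (y1 + (1 - y1 * u * t) * K / v^3))"
    unfolding x2 y2 v_def K_def g_def
    by (rule E1_add_near_infinity[OF P1 \<open>u \<noteq> 0\<close> \<open>t \<noteq> 0\<close> \<open>1 - x1 * u \<noteq> 0\<close> ut refl])
  ultimately show ?thesis
    unfolding red_q_Pt_rat_cong[OF x1 y1] by (simp only:)
qed

lemma red_E1_add_chord:
  assumes "rat_cong q x1 a1" "rat_cong q y1 b1" "rat_cong q x2 a2" "rat_cong q y2 b2"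
    and "\<not> [a1 = a2] (mod int q)"
  shows "red_q q (E1_add (Pt x1 y1) (Pt x2 y2))
       = E1q_line_add q (((b2 - b1) * inv_q q (a2 - a1)) mod int q) a1 b1 a2"
proof -
  have "x1 \<noteq> x2"
  proof
    assume "x1 = x2"
    then have "[a1 = a2] (mod int q)"
      using assms(1,3) rat_cong_unique by simp
    then show False
      using assms(5) by simp
  qed
  have "\<not> int q dvd a2 - a1"
    using assms(5) by (simp add: cong_iff_dvd_diff dvd_diff_commute)
  then have "rat_cong q ((y2 - y1) / (x2 - x1)) (((b2 - b1) * inv_q q (a2 - a1)) mod int q)"
    using assms(1-4) by (intro rat_cong_mod rat_cong_divide rat_cong_diff)
  then show ?thesis
    using E1_add_chord[OF \<open>x1 \<noteq> x2\<close>] red_E1_line_add assms(1-3) by simp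
qed

lemma on_E1_ordinate_square_cong:
  assumes "on_E1 (Pt x1 y1)" "on_E1 (Pt x2 y2)"
    and "rat_cong q x1 a" "rat_cong q y1 b1" "rat_cong q x2 a" "rat_cong q y2 b2"
  shows "[b1^2 = b2^2] (mod int q)"
proof -
  have "rat_cong q (x1 * (x1 + 2) * (x1 + 6)) (a * (a + 2) * (a + 6))"
    using assms(3) by (intro rat_cong_intros)
  then have "rat_cong q (y1^2) (a * (a + 2) * (a + 6))"
    using assms(1) by (simp add: on_E1_Pt)
  then have 1: "[b1^2 = a * (a + 2) * (a + 6)] (mod int q)"
    using rat_cong_unique[OF rat_cong_power[OF assms(4)]] by blast
  have "rat_cong q (x2 * (x2 + 2) * (x2 + 6)) (a * (a + 2) * (a + 6))"
    using assms(5) by (intro rat_cong_intros)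
  then have "rat_cong q (y2^2) (a * (a + 2) * (a + 6))"
    using assms(2) by (simp add: on_E1_Pt)
  then have "[b2^2 = a * (a + 2) * (a + 6)] (mod int q)"
    using rat_cong_unique[OF rat_cong_power[OF assms(6)]] by blast
  then show ?thesis
    using 1 cong_sym cong_trans by blast
qed

lemma red_E1_add_tangent:
  assumes P1: "on_E1 (Pt x1 y1)" and P2: "on_E1 (Pt x2 y2)"
    and x1: "rat_cong q x1 a1" and y1: "rat_cong q y1 b1"
    and x2: "rat_cong q x2 a2" and y2: "rat_cong q y2 b2"
    and a: "[a1 = a2] (mod int q)" and b: "\<not> int q dvd b1 + b2"
  shows "red_q q (E1_add (Pt x1 y1) (Pt x2 y2))
       = E1q_line_add q (((3 * a1^2 + 16 * a1 + 12) * inv_q q (2 * b1)) mod int q) a1 b1 a2"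
proof -
  have x2': "rat_cong q x2 a1"
    using rat_cong_trans[OF x2 cong_sym[OF a]] .
  have "[b2^2 = b1^2] (mod int q)"
    using on_E1_ordinate_square_cong[OF P2 P1 x2' y2 x1 y1] .
  then have "int q dvd (b2 - b1) * (b2 + b1)"
    by (simp add: cong_iff_dvd_diff algebra_simps power2_eq_square)
  then have "int q dvd b2 - b1"
    using b prime_int prime_dvd_mult_iff by (metis add.commute)
  then have "[b1 + b2 = 2 * b1] (mod int q)"
    by (simp add: cong_iff_dvd_diff)
  then have y12: "rat_cong q (y1 + y2) (2 * b1)" and b1: "\<not> int q dvd 2 * b1"
    using rat_cong_trans[OF rat_cong_add[OF y1 y2]] cong_dvd_iff b by blast+
  have "y1 + y2 \<noteq> 0"
  proof
    assume "y1 + y2 = 0"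
    then have "[2 * b1 = 0] (mod int q)"
      using y12 rat_cong_0 rat_cong_unique by simp
    then show False
      using b1 by (simp add: cong_0_iff)
  qed
  define L where "L = (3 * a1^2 + 16 * a1 + 12) * inv_q q (2 * b1)"
  consider (double) "x1 = x2" | (chord) "x1 \<noteq> x2"
    by blast
  then obtain l where "E1_add (Pt x1 y1) (Pt x2 y2) = E1_line_add l x1 y1 x2" "rat_cong q l L"
  proof cases
    case double
    then have "y2^2 = y1^2"
      using P1 P2 by (simp add: on_E1_Pt)
    then have "y2 = y1" "y1 \<noteq> 0"
      using \<open>y1 + y2 \<noteq> 0\<close> by (auto simp: power2_eq_iff)
    then have "E1_add (Pt x1 y1) (Pt x2 y2) = E1_line_add ((3 * x1^2 + 16 * x1 + 12) / (2 * y1)) x1 y1 x2"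
      using double E1_add_tangent by simp
    moreover have "rat_cong q ((3 * x1^2 + 16 * x1 + 12) / (2 * y1)) L"
      unfolding L_def using x1 y1 b1 by (intro rat_cong_divide rat_cong_intros)
    ultimately show ?thesis
      using that by blast
  next
    case chord
    have "(y2 - y1) / (x2 - x1) = (x1^2 + x1 * x2 + x2^2 + 8 * x1 + 8 * x2 + 12) / (y1 + y2)"
      using E1_chord_slope[OF P1 P2 chord \<open>y1 + y2 \<noteq> 0\<close>] .
    moreover have "rat_cong q ((x1^2 + x1 * x2 + x2^2 + 8 * x1 + 8 * x2 + 12) / (y1 + y2))
        ((a1^2 + a1 * a1 + a1^2 + 8 * a1 + 8 * a1 + 12) * inv_q q (2 * b1))"
      using x1 x2' y12 b1 by (intro rat_cong_divide rat_cong_intros)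
    ultimately have "rat_cong q ((y2 - y1) / (x2 - x1)) L"
      unfolding L_def by (simp add: power2_eq_square algebra_simps)
    then show ?thesis
      using that E1_add_chord[OF chord] by blast
  qed
  then show ?thesis
    using red_E1_line_add[OF rat_cong_mod x1 y1 x2] unfolding L_def by simp
qed

end

locale odd_prime_modulus = prime_modulus +
  assumes gt_2: "2 < q"
begin

lemma not_dvd_2: "\<not> int q dvd 2"
proof
  assume "int q dvd 2"
  then have "int q \<le> 2"
    by (rule zdvd_imp_le) simp
  then show False
    using gt_2 by simp
qed

lemma red_E1_add_opposite:
  assumes P1: "on_E1 (Pt x1 y1)" and P2: "on_E1 (Pt x2 y2)"
    and x1: "rat_cong q x1 a1" and y1: "rat_cong q y1 b1"
    and x2: "rat_cong q x2 a2" and y2: "rat_cong q y2 b2"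
    and a: "[a1 = a2] (mod int q)" and b: "int q dvd b1 + b2" and b1: "\<not> int q dvd b1"
  shows "red_q q (E1_add (Pt x1 y1) (Pt x2 y2)) = Inf"
proof -
  have b21: "\<not> int q dvd b2 - b1"
  proof
    assume "int q dvd b2 - b1"
    then have "int q dvd (b1 + b2) - (b2 - b1)"
      using b by (rule dvd_diff[rotated])
    then have "int q dvd 2 * b1"
      by simp
    then show False
      using b1 not_dvd_2 prime_int prime_dvd_mult_iff by blast
  qed
  have "y1 \<noteq> y2"
  proof
    assume "y1 = y2"
    then have "[b1 = b2] (mod int q)"
      using y1 y2 rat_cong_unique by simp
    then show False
      using b21 by (simp add: cong_iff_dvd_diff dvd_diff_commute)
  qed
  show ?thesis
  proof (cases "x1 = x2")
    case True
    then have "y2^2 = y1^2"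
      using P1 P2 by (simp add: on_E1_Pt)
    then have "y2 = - y1"
      using \<open>y1 \<noteq> y2\<close> by (auto simp: power2_eq_iff)
    then show ?thesis
      using True by (simp add: red_q_def)
  next
    case False
    define l s where "l = (y2 - y1) / (x2 - x1)" and "s = (x2 - x1) / (y2 - y1)"
    have ls: "l * s = 1"
      unfolding l_def s_def using False \<open>y1 \<noteq> y2\<close> by simp
    have "rat_cong q s ((a2 - a1) * inv_q q (b2 - b1))"
      unfolding s_def using x1 x2 y1 y2 b21 by (intro rat_cong_divide rat_cong_diff)
    moreover have "[(a2 - a1) * inv_q q (b2 - b1) = 0] (mod int q)"
      using a by (simp add: cong_0_iff cong_iff_dvd_diff dvd_diff_commute)
    ultimately have "rat_cong q s 0"
      by (rule rat_cong_trans)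
    then have "red_q q (E1_line_add l x1 y1 x2) = Inf"
      using red_E1_line_add_pole[OF ls _ x1 x2] by blast
    then show ?thesis
      using E1_add_chord[OF False] unfolding l_def by simp
  qed
qed

lemma red_E1_add:
  assumes A: "on_E1 A" and B: "on_E1 B" and "red_q q A = Pt a b" "\<not> int q dvd b"
  shows "red_q q (E1_add A B) = E1q_add q (red_q q A) (red_q q B)"
proof -
  obtain x1 y1 where A_Pt: "A = Pt x1 y1" and "q_integral q x1"
    using assms(3) by (cases A) (auto simp: red_q_def q_integral_def split: if_splits)
  define a1 b1 where "a1 = rat_red q x1" and "b1 = rat_red q y1"
  have x1: "rat_cong q x1 a1" and y1: "rat_cong q y1 b1"
    unfolding a1_def b1_def
    using \<open>q_integral q x1\<close> on_E1_q_integral A A_Pt rat_cong_rat_red by blast+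
  have redA: "red_q q A = Pt a1 b1" and "\<not> int q dvd b1"
    using assms(3,4) A_Pt \<open>q_integral q x1\<close> by (simp_all add: red_q_Pt a1_def b1_def)
  show ?thesis
  proof (cases B)
    case (Pt x2 y2)
    show ?thesis
    proof (cases "q_integral q x2")
      case False
      then show ?thesis
        using red_E1_add_not_q_integral A B A_Pt Pt \<open>q_integral q x1\<close> redA
        by (simp add: red_q_Pt_Inf)
    next
      case True
      define a2 b2 where "a2 = rat_red q x2" and "b2 = rat_red q y2"
      have x2: "rat_cong q x2 a2" and y2: "rat_cong q y2 b2"
        unfolding a2_def b2_def using True on_E1_q_integral B Pt rat_cong_rat_red by blast+
      have redB: "red_q q B = Pt a2 b2"
        using Pt True by (simp add: red_q_Pt a2_def b2_def)
      consider "\<not> [a1 = a2] (mod int q)" | "[a1 = a2] (mod int q)" "\<not> int q dvd b1 + b2"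
        | "[a1 = a2] (mod int q)" "int q dvd b1 + b2"
        by blast
      then show ?thesis
      proof cases
        case 1
        then show ?thesis
          unfolding A_Pt Pt redA[unfolded A_Pt] redB[unfolded Pt]
          using red_E1_add_chord[OF x1 y1 x2 y2] E1q_add_chord by simp
      next
        case 2
        then show ?thesis
          unfolding A_Pt Pt redA[unfolded A_Pt] redB[unfolded Pt]
          using red_E1_add_tangent[OF _ _ x1 y1 x2 y2] A B A_Pt Pt E1q_add_tangent by simp
      next
        case 3
        then show ?thesis
          unfolding A_Pt Pt redA[unfolded A_Pt] redB[unfolded Pt]
          using red_E1_add_opposite[OF _ _ x1 y1 x2 y2 _ _ \<open>\<not> int q dvd b1\<close>] A B A_Pt Pt
            E1q_add_opposite by simp
      qed
    qed
  qed (simp add: A_Pt redA[unfolded A_Pt])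
qed

text \<open>Cancellation of \<open>P\<close> after reduction, transported from \<open>P + (-(P + C)) = -C\<close> on \<open>E1(\<rat>)\<close>;
  no group law on \<open>E1(\<bbbF>_q)\<close> is needed.\<close>

lemma red_E1_add_cancel:
  assumes "on_E1 P" "on_E1 A" "on_E1 B" "red_q q P = Pt a b" "\<not> int q dvd b"
    and "red_q q (E1_add P A) = red_q q (E1_add P B)"
  shows "red_q q A = red_q q B"
proof -
  have "red_q q (E1_neg C) = E1q_add q (red_q q P) (E1q_neg q (red_q q (E1_add P C)))"
    if "on_E1 C" for C
    using E1_add_neg_add[OF assms(1) that] red_E1_add[OF assms(1) _ assms(4,5)]
      red_E1_neg on_E1_neg on_E1_add assms(1) that by metis
  then have "E1q_neg q (red_q q A) = E1q_neg q (red_q q B)"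
    using assms(2,3,6) red_E1_neg by metis
  then show ?thesis
    using E1q_neg_involutive by metis
qed

end

section \<open>The multiples of \<open>P0\<close> modulo \<open>q\<close>\<close>

locale prime_modulus_gt_3 = odd_prime_modulus +
  assumes gt_3: "3 < q"
begin

lemma not_dvd_24: "\<not> int q dvd 24"
proof -
  have "\<not> int q dvd 3"
  proof
    assume "int q dvd 3"
    then have "int q \<le> 3"
      by (rule zdvd_imp_le) simp
    then show False
      using gt_3 by simp
  qed
  then have "\<not> int q dvd 2 * (2 * (2 * 3))"
    using not_dvd_2 by (intro not_dvd_mult)
  then show ?thesis
    by simp
qed

lemma not_dvd_24_mod: "\<not> int q dvd 24 mod int q"
  using not_dvd_24 by (simp add: dvd_mod_iff)

lemma red_P0: "red_q q P0 = Pt (6 mod int q) (24 mod int q)"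
  unfolding P0_def by (intro red_q_Pt_rat_cong rat_cong_numeral)

lemma red_add_P0: "on_E1 A \<Longrightarrow> red_q q (E1_add P0 A) = E1q_add q (red_q q P0) (red_q q A)"
  by (rule red_E1_add[OF on_E1_P0 _ red_P0 not_dvd_24_mod])

lemma red_add_P0_cancel:
  "on_E1 A \<Longrightarrow> on_E1 B \<Longrightarrow> red_q q (E1_add P0 A) = red_q q (E1_add P0 B) \<Longrightarrow> red_q q A = red_q q B"
  by (rule red_E1_add_cancel[OF on_E1_P0 _ _ red_P0 not_dvd_24_mod])

abbreviation Pq_mult :: "nat \<Rightarrow> int ecpt" where
  "Pq_mult n \<equiv> (E1q_add q (red_q q P0) ^^ n) Inf"

abbreviation order_Pq :: nat where
  "order_Pq \<equiv> E1q_order q (red_q q P0)"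

lemma red_iterate: "red_q q ((E1_add P0 ^^ n) Inf) = Pq_mult n"
  by (induction n) (simp_all add: red_add_P0 on_E1_iterate)

lemma Pq_mult_cancel: "Pq_mult (i + k) = Pq_mult (j + k) \<Longrightarrow> Pq_mult i = Pq_mult j"
proof (induction k)
  case (Suc k)
  then have "red_q q (E1_add P0 ((E1_add P0 ^^ (i + k)) Inf))
      = red_q q (E1_add P0 ((E1_add P0 ^^ (j + k)) Inf))"
    by (simp add: red_add_P0 on_E1_iterate red_iterate)
  then have "red_q q ((E1_add P0 ^^ (i + k)) Inf) = red_q q ((E1_add P0 ^^ (j + k)) Inf)"
    by (rule red_add_P0_cancel[OF on_E1_iterate on_E1_iterate])
  then show ?case
    using Suc.IH by (simp add: red_iterate)
qed simp

lemma Pq_mult_periodic: "\<exists>n > 0. Pq_mult n = Inf"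
proof -
  have "range Pq_mult \<subseteq> insert Inf (case_prod Pt ` ({0..<int q} \<times> {0..<int q}))"
  proof (rule image_subsetI)
    show "Pq_mult n \<in> insert Inf (case_prod Pt ` ({0..<int q} \<times> {0..<int q}))" for n
      using red_q_range[of "(E1_add P0 ^^ n) Inf"] unfolding red_iterate .
  qed
  then have "finite (range Pq_mult)"
    by (rule finite_subset) simp
  then have "\<not> inj Pq_mult"
    using finite_imageD infinite_UNIV_nat by blast
  then obtain i j where "Pq_mult i = Pq_mult j" "i \<noteq> j"
    unfolding inj_def by blast
  then obtain i j where "Pq_mult i = Pq_mult j" "i < j"
  proof (cases "i < j")
    case False
    then have "j < i"
      using \<open>i \<noteq> j\<close> by simp
    then show ?thesis
      by (rule that[OF \<open>Pq_mult i = Pq_mult j\<close>[symmetric]])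
  qed (use that in blast)
  then have "Pq_mult 0 = Pq_mult (j - i)"
    using Pq_mult_cancel[of 0 i "j - i"] by simp
  then show ?thesis
    using \<open>i < j\<close> by (intro exI[of _ "j - i"]) simp
qed

lemma order_Pq_pos: "0 < order_Pq"
  and Pq_mult_order_Pq: "Pq_mult order_Pq = Inf"
  unfolding E1q_order_def using LeastI_ex[OF Pq_mult_periodic] by simp_all

lemma Pq_mult_mod: "Pq_mult n = Pq_mult (n mod order_Pq)"
  using funpow_mod_eq[OF Pq_mult_order_Pq] by simp

lemma red_neg_iterate:
  "j \<le> order_Pq \<Longrightarrow> red_q q (E1_neg ((E1_add P0 ^^ j) Inf)) = Pq_mult (order_Pq - j)"
proof (induction j)
  case 0
  then show ?case
    using Pq_mult_order_Pq by (simp add: E1_neg_def)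
next
  case (Suc j)
  let ?M = "\<lambda>n. (E1_add P0 ^^ n) Inf"
  have "red_q q (E1_add P0 (E1_neg (?M (Suc j)))) = red_q q (E1_neg (?M j))"
    using E1_add_neg_add[OF on_E1_P0 on_E1_iterate] by simp
  also have "\<dots> = Pq_mult (Suc (order_Pq - Suc j))"
    using Suc by (simp add: Suc_diff_Suc)
  also have "\<dots> = red_q q (E1_add P0 (?M (order_Pq - Suc j)))"
    by (simp add: red_add_P0 on_E1_iterate red_iterate)
  finally have "red_q q (E1_neg (?M (Suc j))) = red_q q (?M (order_Pq - Suc j))"
    by (rule red_add_P0_cancel[OF on_E1_neg[OF on_E1_iterate] on_E1_iterate])
  then show ?case
    by (simp add: red_iterate)
qed

lemma red_E1_mul: "red_q q (E1_mul k P0) = Pq_mult (nat (k mod int order_Pq))"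
proof (cases "0 \<le> k")
  case True
  then have "red_q q (E1_mul k P0) = Pq_mult (nat k)"
    by (simp add: E1_mul_def red_iterate)
  also have "\<dots> = Pq_mult (nat k mod order_Pq)"
    by (rule Pq_mult_mod)
  finally show ?thesis
    using True by (simp add: nat_mod_distrib)
next
  case False
  define j where "j = nat (- k) mod order_Pq"
  have "j < order_Pq"
    unfolding j_def using order_Pq_pos by simp
  have "red_q q (E1_mul k P0) = E1q_neg q (Pq_mult (nat (- k)))"
    using False by (simp add: E1_mul_def red_E1_neg on_E1_iterate red_iterate)
  also have "Pq_mult (nat (- k)) = Pq_mult j"
    unfolding j_def by (rule Pq_mult_mod)
  also have "E1q_neg q (Pq_mult j) = red_q q (E1_neg ((E1_add P0 ^^ j) Inf))"
    by (simp add: red_E1_neg on_E1_iterate red_iterate)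
  also have "\<dots> = Pq_mult (order_Pq - j)"
    using red_neg_iterate \<open>j < order_Pq\<close> by simp
  also have "\<dots> = Pq_mult ((order_Pq - j) mod order_Pq)"
    by (rule Pq_mult_mod)
  also have "(order_Pq - j) mod order_Pq = nat (k mod int order_Pq)"
  proof -
    have "int j = (- k) mod int order_Pq"
      unfolding j_def using False by (simp add: zmod_int)
    have "int ((order_Pq - j) mod order_Pq) = (int order_Pq + - int j) mod int order_Pq"
      using \<open>j < order_Pq\<close> by (simp add: zmod_int of_nat_diff)
    also have "\<dots> = (- ((- k) mod int order_Pq)) mod int order_Pq"
      unfolding mod_add_self1 \<open>int j = _\<close> ..
    also have "\<dots> = k mod int order_Pq"
      unfolding mod_minus_eq by simp
    finally show ?thesis
      by simp
  qed
  finally show ?thesis .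
qed

end

section \<open>The image of \<open>C_D(\<bbbF>_q)\<close>\<close>

definition phi_CD :: "nat \<Rightarrow> int \<Rightarrow> int ecpt set" where
  "phi_CD q D = phi_q q ` CD_Fq q D"

context prime_modulus
begin

lemma phi_CD_E1q_neg:
  assumes "X \<in> phi_CD q D"
  shows "E1q_neg q X \<in> phi_CD q D"
proof -
  obtain x0 x1 x2 x3 x4 where mem: "(x0, x1, x2, x3, x4) \<in> CD_Fq q D"
    and X: "X = phi_q q (x0, x1, x2, x3, x4)"
    using assms unfolding phi_CD_def by auto
  show ?thesis
  proof (cases "x4 mod int q = 0")
    case True
    then show ?thesis
      using assms X by (simp add: phi_q_def E1q_neg_def)
  next
    case False
    define y0 where "y0 = (- x0) mod int q"
    have y0: "[y0 = - x0] (mod int q)"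
      unfolding y0_def by (simp add: cong_def)
    then have "[y0^2 = x0^2] (mod int q)"
      using cong_pow[OF y0, of 2] by simp
    then have "[y0^2 - 2 * x1^2 + x2^2 = x0^2 - 2 * x1^2 + x2^2] (mod int q)"
      by (intro cong_add cong_diff cong_refl)
    moreover have "y0 \<in> {0..<int q}" "x4 \<noteq> 0"
      unfolding y0_def using prime_gt_0_nat[OF prime] False by auto
    ultimately have "(y0, x1, x2, x3, x4) \<in> CD_Fq q D"
      using mem unfolding CD_Fq_def cong_def by auto
    moreover have "(6 * y0^2 * inv_q q (x4^2)) mod int q = (6 * x0^2 * inv_q q (x4^2)) mod int q"
      using \<open>[y0^2 = x0^2] (mod int q)\<close> unfolding cong_def[symmetric]
      by (intro cong_mult cong_refl)
    moreover have "[24 * y0 * x1 * x2 * inv_q q (x4^3) = 24 * (- x0) * x1 * x2 * inv_q q (x4^3)] (mod int q)"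
      using y0 by (intro cong_mult cong_refl)
    then have "(24 * y0 * x1 * x2 * inv_q q (x4^3)) mod int q
        = (- ((24 * x0 * x1 * x2 * inv_q q (x4^3)) mod int q)) mod int q"
      unfolding mod_minus_eq by (simp add: cong_def)
    ultimately have "phi_q q (y0, x1, x2, x3, x4) = E1q_neg q X" "(y0, x1, x2, x3, x4) \<in> CD_Fq q D"
      unfolding X using False by (simp_all add: phi_q_def E1q_neg_def)
    then show ?thesis
      unfolding phi_CD_def by (metis image_eqI)
  qed
qed

lemma phi_CD_twist_subset:
  assumes v: "[D' * v^2 = D] (mod int q)" "\<not> int q dvd v"
  shows "phi_CD q D \<subseteq> phi_CD q D'"
proof
  fix X assume "X \<in> phi_CD q D"
  then obtain x0 x1 x2 x3 x4 where mem: "(x0, x1, x2, x3, x4) \<in> CD_Fq q D"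
    and X: "X = phi_q q (x0, x1, x2, x3, x4)"
    unfolding phi_CD_def by auto
  define w where "w = (v * x3) mod int q"
  have "[D' * w^2 = D' * (v * x3)^2] (mod int q)"
    unfolding w_def by (intro cong_mult cong_pow cong_refl) (simp add: cong_def)
  also have "D' * (v * x3)^2 = (D' * v^2) * x3^2"
    by (simp add: algebra_simps power2_eq_square)
  also have "[(D' * v^2) * x3^2 = D * x3^2] (mod int q)"
    using v(1) by (rule cong_scalar_right)
  finally have w: "[D' * w^2 = D * x3^2] (mod int q)" .
  have "[x1^2 - 2 * x2^2 + D' * w^2 = x1^2 - 2 * x2^2 + D * x3^2] (mod int q)"
    using w by (intro cong_add cong_refl)
  moreover have "[x2^2 - 2 * (D' * w^2) + x4^2 = x2^2 - 2 * (D * x3^2) + x4^2] (mod int q)"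
    using cong_scalar_left[OF w, of 2] by (intro cong_add cong_diff cong_refl)
  moreover have "w \<in> {0..<int q}"
    unfolding w_def using prime_gt_0_nat[OF prime] by simp
  moreover have "x3 = 0" if "w = 0"
  proof -
    have "0 \<le> x3" "x3 < int q"
      using mem by (simp_all add: CD_Fq_def)
    moreover have "int q dvd v * x3"
      using that unfolding w_def by (simp add: dvd_eq_mod_eq_0)
    then have "int q dvd x3"
      using v(2) prime_int prime_dvd_mult_iff by blast
    ultimately show ?thesis
      by (simp add: dvd_eq_mod_eq_0)
  qed
  ultimately have "(x0, x1, x2, w, x4) \<in> CD_Fq q D'"
    using mem unfolding CD_Fq_def cong_def by (auto simp: mult.assoc)
  moreover have "phi_q q (x0, x1, x2, w, x4) = X"
    unfolding X by (simp add: phi_q_def)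
  ultimately show "X \<in> phi_CD q D'"
    unfolding phi_CD_def by force
qed

end

context odd_prime_modulus
begin

lemma Legendre_cases: "\<not> int q dvd D \<Longrightarrow> Legendre D (int q) = 1 \<or> Legendre D (int q) = -1"
  unfolding Legendre_def by (auto simp: cong_0_iff)

lemma QuadRes_mult_if_Legendre_eq:
  assumes "\<not> int q dvd D" "\<not> int q dvd D'" "Legendre D (int q) = Legendre D' (int q)"
  shows "QuadRes (int q) (D * D')"
proof -
  have "[Legendre (D * D') (int q) = (D * D') ^ ((q - 1) div 2)] (mod int q)"
    using euler_criterion[OF prime gt_2] .
  also have "(D * D') ^ ((q - 1) div 2) = D ^ ((q - 1) div 2) * D' ^ ((q - 1) div 2)"
    by (rule power_mult_distrib)
  also have "[\<dots> = Legendre D (int q) * Legendre D' (int q)] (mod int q)"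
    using euler_criterion[OF prime gt_2] by (intro cong_mult) (simp_all add: cong_sym)
  also have "Legendre D (int q) * Legendre D' (int q) = 1"
    using Legendre_cases[OF assms(1)] assms(3) by auto
  finally have "[Legendre (D * D') (int q) = 1] (mod int q)" .
  moreover have "\<not> [-1 = 1] (mod int q)"
    using not_dvd_2 by (simp add: cong_iff_dvd_diff)
  ultimately have "Legendre (D * D') (int q) = 1"
    using Legendre_cases[OF not_dvd_mult[OF assms(1,2)]] by auto
  then show ?thesis
    unfolding Legendre_def by (auto split: if_splits)
qed

lemma twist_exists:
  assumes "\<not> int q dvd D" "\<not> int q dvd D'" "Legendre D (int q) = Legendre D' (int q)"
  obtains v where "[D' * v^2 = D] (mod int q)" "\<not> int q dvd v"
proof -
  obtain c where c: "[c^2 = D * D'] (mod int q)"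
    using QuadRes_mult_if_Legendre_eq[OF assms] unfolding QuadRes_def by blast
  define v where "v = c * inv_q q D'"
  have D': "[D' * inv_q q D' = 1] (mod int q)"
    using inv_q_cong[OF prime assms(2)] .
  have "D' * v^2 = c^2 * (D' * inv_q q D') * inv_q q D'"
    unfolding v_def by (simp add: algebra_simps power2_eq_square)
  also have "[\<dots> = (D * D') * 1 * inv_q q D'] (mod int q)"
    using c D' by (intro cong_mult cong_refl)
  also have "(D * D') * 1 * inv_q q D' = D * (D' * inv_q q D')"
    by (simp add: ac_simps)
  also have "[\<dots> = D * 1] (mod int q)"
    using D' by (intro cong_mult cong_refl)
  finally have v: "[D' * v^2 = D] (mod int q)"
    by simp
  moreover have "\<not> int q dvd v"
    using v assms(1) cong_dvd_iff by (metis dvd_mult dvd_mult2 power2_eq_square)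
  ultimately show ?thesis
    using that by blast
qed

lemma phi_CD_Legendre_eq:
  assumes "\<not> int q dvd D" "\<not> int q dvd D'" "Legendre D (int q) = Legendre D' (int q)"
  shows "phi_CD q D = phi_CD q D'"
  using twist_exists[OF assms] twist_exists[OF assms(2,1) assms(3)[symmetric]]
    phi_CD_twist_subset by (metis subset_antisym)

end

context prime_modulus_gt_3
begin

lemma red_P0_mem_phi_CD:
  assumes "\<not> int q dvd D" "Legendre D (int q) = 1"
  shows "red_q q P0 \<in> phi_CD q D"
proof -
  obtain y where y: "[y^2 = D] (mod int q)"
    using assms unfolding Legendre_def QuadRes_def by (auto split: if_splits)
  then have "\<not> int q dvd y"
    using assms(1) cong_dvd_iff by (metis dvd_mult power2_eq_square)
  define w where "w = inv_q q y"
  have "[D * w^2 = y^2 * w^2] (mod int q)"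
    using y by (simp add: cong_sym cong_scalar_right)
  also have "y^2 * w^2 = (y * w)^2"
    by (simp add: power_mult_distrib)
  also have "[(y * w)^2 = 1^2] (mod int q)"
    unfolding w_def using inv_q_cong[OF prime \<open>\<not> int q dvd y\<close>] by (rule cong_pow)
  finally have w: "[D * w^2 = 1] (mod int q)"
    by simp
  have "[1^2 - 2 * 1^2 + D * w^2 = 1^2 - 2 * 1^2 + 1] (mod int q)"
    using w by (intro cong_add cong_refl)
  moreover have "[1^2 - 2 * (D * w^2) + 1^2 = 1^2 - 2 * 1 + 1^2] (mod int q)"
    using cong_scalar_left[OF w, of 2] by (intro cong_add cong_diff cong_refl)
  ultimately have "(1, 1, 1, w, 1) \<in> CD_Fq q D"
    using inv_q_range[OF prime, of y] gt_3 unfolding CD_Fq_def w_def[symmetric]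
    by (simp add: cong_0_iff dvd_eq_mod_eq_0 mult.assoc)
  moreover have "phi_q q (1, 1, 1, w, 1) = red_q q P0"
    using gt_3 by (simp add: phi_q_def inv_q_def red_P0)
  ultimately show ?thesis
    unfolding phi_CD_def by (metis image_eqI)
qed

text \<open>The sets \<open>M\<^sub>\<epsilon>\<close> of the statement.\<close>

definition admissible_residues :: "int \<Rightarrow> int set" where
  "admissible_residues \<epsilon> = {m \<in> {0..<int order_Pq}.
     \<forall>D. \<not> int q dvd D \<and> Legendre D (int q) = \<epsilon> \<longrightarrow> Pq_mult (nat m) \<in> phi_CD q D}"

lemma admissible_residues_subset: "admissible_residues \<epsilon> \<subseteq> {0..<int order_Pq}"
  unfolding admissible_residues_def by blast

lemma mem_admissible_residues_iff:
  assumes "\<not> int q dvd D"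
  shows "m \<in> admissible_residues (Legendre D (int q))
     \<longleftrightarrow> m \<in> {0..<int order_Pq} \<and> Pq_mult (nat m) \<in> phi_CD q D"
proof
  assume "m \<in> admissible_residues (Legendre D (int q))"
  then show "m \<in> {0..<int order_Pq} \<and> Pq_mult (nat m) \<in> phi_CD q D"
    unfolding admissible_residues_def using assms by blast
next
  assume m: "m \<in> {0..<int order_Pq} \<and> Pq_mult (nat m) \<in> phi_CD q D"
  have "Pq_mult (nat m) \<in> phi_CD q D'"
    if "\<not> int q dvd D'" "Legendre D' (int q) = Legendre D (int q)" for D'
    using phi_CD_Legendre_eq[OF that(1) assms that(2)] m by simp
  then show "m \<in> admissible_residues (Legendre D (int q))"
    unfolding admissible_residues_def using m by blast
qed

lemma H_Dq_Legendre_eq: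
  assumes "\<not> int q dvd D" "\<not> int q dvd D'" "Legendre D (int q) = Legendre D' (int q)"
  shows "H_Dq D q = H_Dq D' q"
  using phi_CD_Legendre_eq[OF assms] unfolding H_Dq_def phi_CD_def by (rule arg_cong)

lemma H_Dq_eq:
  assumes "\<not> int q dvd D"
  shows "H_Dq D q = {E1_mul k P0 | k. odd k \<and>
           (\<exists>m \<in> admissible_residues (Legendre D (int q)). [k = m] (mod int order_Pq))}"
proof -
  have "(\<exists>m \<in> admissible_residues (Legendre D (int q)). [k = m] (mod int order_Pq))
      \<longleftrightarrow> red_q q (E1_mul k P0) \<in> phi_CD q D" (is "?L \<longleftrightarrow> ?R") for k
  proof
    assume ?L
    then obtain m where "m \<in> {0..<int order_Pq}" "Pq_mult (nat m) \<in> phi_CD q D" "[k = m] (mod int order_Pq)"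
      using mem_admissible_residues_iff[OF assms] by blast
    then show ?R
      unfolding red_E1_mul cong_def by simp
  next
    assume ?R
    then have "k mod int order_Pq \<in> admissible_residues (Legendre D (int q))"
      unfolding mem_admissible_residues_iff[OF assms] red_E1_mul using order_Pq_pos by simp
    then show ?L
      by (intro bexI[of _ "k mod int order_Pq"]) (simp_all add: cong_def)
  qed
  then show ?thesis
    unfolding H_Dq_def H_def phi_CD_def by blast
qed

lemma one_mem_admissible_residues: "1 mod int order_Pq \<in> admissible_residues 1"
proof -
  have "order_Pq \<noteq> 1"
  proof
    assume "order_Pq = 1"
    then have "Pq_mult 1 = Inf"
      using Pq_mult_order_Pq by simp
    then show False
      by (simp add: red_P0)
  qed
  then have "Pq_mult (nat (1 mod int order_Pq)) = red_q q P0"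
    using order_Pq_pos by (simp add: red_P0)
  moreover have "1 mod int order_Pq \<in> {0..<int order_Pq}"
    using order_Pq_pos by simp
  ultimately show ?thesis
    unfolding admissible_residues_def using red_P0_mem_phi_CD by (simp del: One_nat_def)
qed

lemma uminus_mem_admissible_residues:
  assumes "k \<in> admissible_residues \<epsilon>"
  shows "(- k) mod int order_Pq \<in> admissible_residues \<epsilon>"
proof -
  have "k \<in> {0..<int order_Pq}"
    using assms admissible_residues_subset by blast
  then have k: "k mod int order_Pq = k"
    by simp
  have "Pq_mult (nat ((- k) mod int order_Pq)) = red_q q (E1_neg (E1_mul k P0))"
    unfolding E1_mul_uminus[symmetric] red_E1_mul ..
  also have "\<dots> = E1q_neg q (Pq_mult (nat k))"
    using red_E1_neg[OF on_E1_mul] red_E1_mul k by simp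
  finally have "Pq_mult (nat ((- k) mod int order_Pq)) = E1q_neg q (Pq_mult (nat k))" .
  moreover have "(- k) mod int order_Pq \<in> {0..<int order_Pq}"
    using order_Pq_pos by simp
  moreover have "Pq_mult (nat k) \<in> phi_CD q D" if "\<not> int q dvd D" "Legendre D (int q) = \<epsilon>" for D
    using assms that unfolding admissible_residues_def by blast
  ultimately show ?thesis
    unfolding admissible_residues_def using phi_CD_E1q_neg by simp
qed

end

theorem proposition6p4:
  fixes q :: nat
  assumes "prime q" and "q > 3"
  shows "(\<forall>D D'. squarefree D \<and> \<not> int q dvd D \<and> squarefree D' \<and> \<not> int q dvd D'
            \<and> Legendre D (int q) = Legendre D' (int q) \<longrightarrow> H_Dq D q = H_Dq D' q)
    \<and> (let Oq = E1q_order q (red_q q P0) in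
       \<exists>M :: int \<Rightarrow> int set.
          M 1 \<subseteq> {0..<int Oq} \<and> M (-1) \<subseteq> {0..<int Oq}
        \<and> (\<forall>D. squarefree D \<and> \<not> int q dvd D \<longrightarrow>
              H_Dq D q = {E1_mul k P0 | k. odd k \<and>
                            (\<exists>m \<in> M (Legendre D (int q)). [k = m] (mod int Oq))})
        \<and> 1 mod int Oq \<in> M 1
        \<and> (\<forall>\<epsilon> \<in> {1, -1}. \<forall>k \<in> M \<epsilon>. (- k) mod int Oq \<in> M \<epsilon>))"
proof -
  interpret prime_modulus_gt_3 q
    using assms by unfold_locales simp_all
  show ?thesis
    unfolding Let_def
    using H_Dq_Legendre_eq H_Dq_eq admissible_residues_subset one_mem_admissible_residues
      uminus_mem_admissible_residues
    by (intro conjI exI[of _ admissible_residues]) blast+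
qed

end
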